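(* Let $2\le d_1\le d_2\le d_3\le d_4$, let $2\le s\le d_1$, and let $|\varphi\rangle=\sum_{i,j,k,r}a_{ijkr}|ijkr\rangle$ be a normalized pure state in $H_1\otimes H_2\otimes H_3\otimes H_4$ with $\dim H_i=d_i$. Then $$C^2(|\varphi\rangle)\ \ge\ \frac{1}{\binom{d_1-2}{s-2}\binom{d_2-2}{s-2}\binom{d_3-1}{s-1}\binom{d_4-1}{s-1}}\sum C^2(|\varphi\rangle_{s\otimes s\otimes s\otimes s}),$$ where the sum runs over all pure substates $|\varphi\rangle_{s\otimes s\otimes s\otimes s}=(G_1\otimes G_2\otimes G_3\otimes G_4)|\varphi\rangle$, $G_i=\sum_{x\in S_i}|x\rangle\langle x|$, over all choices of subsets $S_i\subseteq\{1,\dots,d_i\}$ with $|S_i|=s$.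
   Context: $C$ denotes the four-partite concurrence of a (not necessarily normalized) vector $|\psi\rangle$ with $\sigma=|\psi\rangle\langle\psi|$: $C(|\psi\rangle)=2^{-1}\sqrt{14(\mathrm{tr}\,\sigma)^2-\sum_\alpha\mathrm{tr}(\sigma_\alpha^2)}$, $\alpha$ running over the 14 nonempty proper subsets of $\{1,2,3,4\}$ and $\sigma_\alpha=\mathrm{tr}_{\bar\alpha}\sigma$. The computational bases of $H_i\cong\mathbb{C}^{d_i}$ are fixed. *)

theory Defs
  imports Complex_Main "HOL-Library.FuncSet"
begin

text \<open>Party k (k = 0,1,2,3) has dimension d k; basis indices
  are 0..<d k. A (not necessarily normalized) vector is given by its coefficient
  function on index tuples x (functions on {0..<4}).\<close>

definition tuples :: "(nat \<Rightarrow> nat) \<Rightarrow> (nat \<Rightarrow> nat) set" where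
  "tuples d = PiE {0..<4} (\<lambda>k. {0..<d k})"

definition merge :: "nat set \<Rightarrow> (nat \<Rightarrow> nat) \<Rightarrow> (nat \<Rightarrow> nat) \<Rightarrow> (nat \<Rightarrow> nat)" where
  "merge al u v = (\<lambda>k. if k \<in> al then u k else v k)"

text \<open>tr sigma, for sigma = |psi><psi|\<close>
definition trace_proj :: "(nat \<Rightarrow> nat) \<Rightarrow> ((nat \<Rightarrow> nat) \<Rightarrow> complex) \<Rightarrow> real" where
  "trace_proj d a = (\<Sum>x\<in>tuples d. (cmod (a x))^2)"

text \<open>tr (sigma_al^2), sigma_al = partial trace of |psi><psi| over the complement of al,
  written out in coordinates.\<close>
definition reduced_purity :: "(nat \<Rightarrow> nat) \<Rightarrow> ((nat \<Rightarrow> nat) \<Rightarrow> complex) \<Rightarrow> nat set \<Rightarrow> complex" where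
  "reduced_purity d a al = (\<Sum>x\<in>tuples d. \<Sum>y\<in>tuples d.
      a x * cnj (a (merge al y x)) * a y * cnj (a (merge al x y)))"

definition proper_subsets4 :: "nat set set" where
  "proper_subsets4 = {al. al \<subseteq> {0..<4} \<and> al \<noteq> {} \<and> al \<noteq> {0..<4}}"

definition concurrence4 :: "(nat \<Rightarrow> nat) \<Rightarrow> ((nat \<Rightarrow> nat) \<Rightarrow> complex) \<Rightarrow> real" where
  "concurrence4 d a = (1/2) * sqrt (14 * (trace_proj d a)^2
      - (\<Sum>al\<in>proper_subsets4. Re (reduced_purity d a al)))"

text \<open>(G_1 \<otimes> ... \<otimes> G_4)|psi>, G_k the projector onto span{|x> : x \<in> S k}.\<close>
definition substate :: "(nat \<Rightarrow> nat set) \<Rightarrow> ((nat \<Rightarrow> nat) \<Rightarrow> complex) \<Rightarrow> ((nat \<Rightarrow> nat) \<Rightarrow> complex)" where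
  "substate S a = (\<lambda>x. if \<forall>k<4. x k \<in> S k then a x else 0)"

definition subset_choices :: "(nat \<Rightarrow> nat) \<Rightarrow> nat \<Rightarrow> (nat \<Rightarrow> nat set) set" where
  "subset_choices d s = PiE {0..<4} (\<lambda>k. {A. A \<subseteq> {0..<d k} \<and> card A = s})"

end

theory Submission imports Defs begin

text \<open>Expanding the squares, \<open>C\<^sup>2\<close> equals one eighth of the sum, over the 14 cuts \<open>\<alpha>\<close> and all
  pairs of basis tuples \<open>x, y\<close>, of the defects \<open>|a(x) a(y) - a(x') a(y')|\<^sup>2\<close>, where \<open>x', y'\<close> arise from
  \<open>x, y\<close> by exchanging the coordinates in \<open>\<alpha>\<close>. Projecting onto the subsets \<open>S\<^sub>k\<close> keeps exactly
  the defects of those pairs with \<open>x\<^sub>k, y\<^sub>k \<in> S\<^sub>k\<close> for all \<open>k\<close>, so every defect is counted once for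
  each choice of subsets containing the coordinates of \<open>x\<close> and \<open>y\<close>. A nonzero defect forces
  \<open>x\<close> and \<open>y\<close> to differ in at least two coordinates, and then the number of such choices is at
  most \<open>C(d\<^sub>1-2,s-2) C(d\<^sub>2-2,s-2) C(d\<^sub>3-1,s-1) C(d\<^sub>4-1,s-1)\<close>, the worst case being that the two
  differing coordinates are those of the smallest dimensions.\<close>

definition exchange_defect ::
    "((nat \<Rightarrow> nat) \<Rightarrow> complex) \<Rightarrow> nat set \<Rightarrow> (nat \<Rightarrow> nat) \<Rightarrow> (nat \<Rightarrow> nat) \<Rightarrow> real" where
  "exchange_defect a al x y = (cmod (a x * a y - a (merge al y x) * a (merge al x y)))^2"

definition total_defect :: "(nat \<Rightarrow> nat) \<Rightarrow> ((nat \<Rightarrow> nat) \<Rightarrow> complex) \<Rightarrow> real" where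
  "total_defect d a =
     (\<Sum>al\<in>proper_subsets4. \<Sum>x\<in>tuples d. \<Sum>y\<in>tuples d. exchange_defect a al x y)"

lemma exchange_defect_nonneg: "0 \<le> exchange_defect a al x y"
  by (simp add: exchange_defect_def)

lemma merge_in_tuples: "x \<in> tuples d \<Longrightarrow> y \<in> tuples d \<Longrightarrow> merge al x y \<in> tuples d"
  unfolding tuples_def merge_def PiE_def Pi_def extensional_def by auto

lemma merge_merge: "merge al (merge al x y) (merge al y x) = x"
  by (auto simp: merge_def fun_eq_iff)

lemma card_proper_subsets4: "card proper_subsets4 = 14"
proof -
  have "proper_subsets4 = Pow {0..<4::nat} - {{}, {0..<4}}"
    unfolding proper_subsets4_def by auto
  moreover have "card (Pow {0..<4::nat} - {{}, {0..<4}}) = 16 - 2"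
    by (subst card_Diff_subset) (auto simp: card_Pow)
  ultimately show ?thesis by simp
qed

lemma sum_norm_exchanged_products:
  "(\<Sum>x\<in>tuples d. \<Sum>y\<in>tuples d. (cmod (a (merge al y x) * a (merge al x y)))^2)
   = (trace_proj d a)^2"
proof -
  have "(\<Sum>x\<in>tuples d. \<Sum>y\<in>tuples d. (cmod (a (merge al y x) * a (merge al x y)))^2)
     = (\<Sum>(x,y)\<in>tuples d \<times> tuples d. (cmod (a (merge al y x) * a (merge al x y)))^2)"
    by (rule sum.cartesian_product)
  also have "\<dots> = (\<Sum>(x,y)\<in>tuples d \<times> tuples d. (cmod (a x) * cmod (a y))^2)"
    by (rule sum.reindex_bij_witness[where i="\<lambda>(x,y). (merge al y x, merge al x y)"
          and j="\<lambda>(x,y). (merge al y x, merge al x y)"])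
       (auto simp: merge_merge merge_in_tuples norm_mult)
  also have "\<dots> = (trace_proj d a)^2"
    unfolding trace_proj_def power2_eq_square[of "sum _ _"] sum_product sum.cartesian_product
    by (simp add: power_mult_distrib)
  finally show ?thesis .
qed

lemma sum_exchange_defect:
  "(\<Sum>x\<in>tuples d. \<Sum>y\<in>tuples d. exchange_defect a al x y)
   = 2 * (trace_proj d a)^2 - 2 * Re (reduced_purity d a al)"
proof -
  have cmod_diff_sq: "(cmod (u - v))^2 = (cmod u)^2 + (cmod v)^2 - 2 * Re (u * cnj v)" for u v
    by (simp add: cmod_power2 power2_diff algebra_simps)
  have "merge {} y x = x" for x y by (simp add: merge_def)
  then have products: "(\<Sum>x\<in>tuples d. \<Sum>y\<in>tuples d. (cmod (a x * a y))^2) = (trace_proj d a)^2"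
    using sum_norm_exchanged_products[where al="{}"] by simp
  have "Re (reduced_purity d a al) = (\<Sum>x\<in>tuples d. \<Sum>y\<in>tuples d.
      Re ((a x * a y) * cnj (a (merge al y x) * a (merge al x y))))"
    unfolding reduced_purity_def Re_sum by (simp add: algebra_simps)
  moreover have "(\<Sum>x\<in>tuples d. \<Sum>y\<in>tuples d. exchange_defect a al x y)
     = (\<Sum>x\<in>tuples d. \<Sum>y\<in>tuples d. (cmod (a x * a y))^2)
       + (\<Sum>x\<in>tuples d. \<Sum>y\<in>tuples d. (cmod (a (merge al y x) * a (merge al x y)))^2)
       - 2 * (\<Sum>x\<in>tuples d. \<Sum>y\<in>tuples d.
                Re ((a x * a y) * cnj (a (merge al y x) * a (merge al x y))))"
    unfolding exchange_defect_def cmod_diff_sq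
    by (simp add: sum.distrib sum_subtractf sum_distrib_left)
  ultimately show ?thesis
    using products sum_norm_exchanged_products[where al=al] by simp
qed

lemma concurrence4_sq_eq_total_defect: "(concurrence4 d a)^2 = total_defect d a / 8"
proof -
  have "14 * (trace_proj d a)^2 - (\<Sum>al\<in>proper_subsets4. Re (reduced_purity d a al))
      = total_defect d a / 2"
    unfolding total_defect_def sum_exchange_defect
    by (simp add: sum_subtractf sum_distrib_left[symmetric] card_proper_subsets4)
  moreover have "0 \<le> total_defect d a"
    unfolding total_defect_def by (intro sum_nonneg exchange_defect_nonneg)
  ultimately show ?thesis
    unfolding concurrence4_def by (simp add: power_mult_distrib power_divide)
qed

lemma exchange_defect_substate:
  "exchange_defect (substate S a) al x y =
     (if \<forall>k<4. {x k, y k} \<subseteq> S k then exchange_defect a al x y else 0)"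
proof (cases "\<forall>k<4. {x k, y k} \<subseteq> S k")
  case True
  then have "\<forall>k<4. merge al y x k \<in> S k" "\<forall>k<4. merge al x y k \<in> S k"
    by (auto simp: merge_def)
  with True show ?thesis by (simp add: exchange_defect_def substate_def)
next
  case False
  then obtain k z where k: "k < 4" "z k \<notin> S k" "z = x \<or> z = y" by auto
  then have "merge al y x k = z k \<or> merge al x y k = z k"
    by (auto simp: merge_def)
  with k False show ?thesis
    by (auto simp: exchange_defect_def substate_def)
qed

text \<open>If \<open>x\<close> and \<open>y\<close> agree on \<open>\<alpha>\<close> or on its complement, the exchange does nothing.\<close>
lemma exchange_defect_nonzero_imp_two_diffs:
  assumes "x \<in> tuples d" "y \<in> tuples d" "exchange_defect a al x y \<noteq> 0"
  obtains i j where "i < 4" "j < 4" "i \<noteq> j" "x i \<noteq> y i" "x j \<noteq> y j"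
proof -
  have outside: "x k = y k" if "\<not> k < 4" for k
    using assms(1,2) that unfolding tuples_def by (metis PiE_arb atLeastLessThan_iff)
  have "\<not> (\<forall>k\<in>al. x k = y k)"
  proof
    assume "\<forall>k\<in>al. x k = y k"
    then have "merge al y x = x" "merge al x y = y" by (auto simp: merge_def fun_eq_iff)
    with assms(3) show False by (simp add: exchange_defect_def)
  qed
  moreover have "\<not> (\<forall>k. k \<notin> al \<longrightarrow> x k = y k)"
  proof
    assume "\<forall>k. k \<notin> al \<longrightarrow> x k = y k"
    then have "merge al y x = y" "merge al x y = x" by (auto simp: merge_def fun_eq_iff)
    with assms(3) show False by (simp add: exchange_defect_def mult.commute)
  qed
  ultimately obtain i j where "i \<in> al" "x i \<noteq> y i" "j \<notin> al" "x j \<noteq> y j" by blast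
  with outside that show ?thesis by metis
qed

lemma card_subsets_containing:
  assumes "finite F" "G \<subseteq> F" "card G \<le> s"
  shows "card {A. A \<subseteq> F \<and> card A = s \<and> G \<subseteq> A} = (card F - card G) choose (s - card G)"
proof -
  have fin_G: "finite G" using assms finite_subset by blast
  have "bij_betw (\<lambda>A. A - G) {A. A \<subseteq> F \<and> card A = s \<and> G \<subseteq> A}
          {B. B \<subseteq> F - G \<and> card B = s - card G}"
  proof (rule bij_betw_byWitness[where f'="\<lambda>B. B \<union> G"])
    show "(\<lambda>B. B \<union> G) ` {B. B \<subseteq> F - G \<and> card B = s - card G}
            \<subseteq> {A. A \<subseteq> F \<and> card A = s \<and> G \<subseteq> A}"
    proof clarify
      fix B assume B: "B \<subseteq> F - G" "card B = s - card G"
      then have "card (B \<union> G) = card B + card G"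
        using fin_G assms(1) finite_subset by (subst card_Un_disjoint) auto
      with B assms show "B \<union> G \<subseteq> F \<and> card (B \<union> G) = s \<and> G \<subseteq> B \<union> G" by auto
    qed
  qed (use fin_G in \<open>auto simp: card_Diff_subset\<close>)
  then have "card {A. A \<subseteq> F \<and> card A = s \<and> G \<subseteq> A} = card (F - G) choose (s - card G)"
    using assms by (simp add: bij_betw_same_card n_subsets)
  then show ?thesis using assms fin_G by (simp add: card_Diff_subset)
qed

lemma finite_subset_choices: "finite (subset_choices d s)"
  unfolding subset_choices_def
  by (intro finite_PiE) (auto intro: finite_subset[of _ "Pow {0..<d _}"])

lemma card_subset_choices_containing:
  assumes "x \<in> tuples d" "y \<in> tuples d" "2 \<le> s"
  shows "card {S \<in> subset_choices d s. \<forall>k<4. {x k, y k} \<subseteq> S k}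
    = (\<Prod>k<4. (d k - card {x k, y k}) choose (s - card {x k, y k}))"
proof -
  have "{S \<in> subset_choices d s. \<forall>k<4. {x k, y k} \<subseteq> S k}
     = PiE {0..<4} (\<lambda>k. {A. A \<subseteq> {0..<d k} \<and> card A = s \<and> {x k, y k} \<subseteq> A})"
    unfolding subset_choices_def
    by (simp add: PiE_iff set_eq_iff Ball_def) blast
  moreover have "card {A. A \<subseteq> {0..<d k} \<and> card A = s \<and> {x k, y k} \<subseteq> A}
      = (d k - card {x k, y k}) choose (s - card {x k, y k})" if "k < 4" for k
  proof -
    have "{x k, y k} \<subseteq> {0..<d k}"
      using assms(1,2) that unfolding tuples_def by (auto simp: PiE_iff)
    moreover have "card {x k, y k} \<le> s"
      using assms(3) by (cases "x k = y k") auto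
    ultimately show ?thesis
      using card_subsets_containing[of "{0..<d k}" "{x k, y k}" s] by simp
  qed
  ultimately show ?thesis
    by (simp add: card_PiE atLeast0LessThan)
qed

lemma sum_total_defect_substate:
  "(\<Sum>S\<in>subset_choices d s. total_defect d (substate S a)) =
   (\<Sum>al\<in>proper_subsets4. \<Sum>x\<in>tuples d. \<Sum>y\<in>tuples d. exchange_defect a al x y *
      real (card {S \<in> subset_choices d s. \<forall>k<4. {x k, y k} \<subseteq> S k}))"
proof -
  have "(\<Sum>S\<in>subset_choices d s. total_defect d (substate S a)) =
    (\<Sum>al\<in>proper_subsets4. \<Sum>x\<in>tuples d. \<Sum>y\<in>tuples d. \<Sum>S\<in>subset_choices d s.
      (if \<forall>k<4. {x k, y k} \<subseteq> S k then exchange_defect a al x y else 0))"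
    unfolding total_defect_def exchange_defect_substate
    by (subst sum.swap, rule sum.cong, simp, subst sum.swap, rule sum.cong, simp, rule sum.swap)
  also have "\<dots> = (\<Sum>al\<in>proper_subsets4. \<Sum>x\<in>tuples d. \<Sum>y\<in>tuples d. exchange_defect a al x y *
      real (card {S \<in> subset_choices d s. \<forall>k<4. {x k, y k} \<subseteq> S k}))"
    by (simp add: sum.If_cases finite_subset_choices Int_def mult.commute)
  finally show ?thesis .
qed

lemma real_binomial_diff2:
  assumes "2 \<le> s" "s \<le> n"
  shows "real ((n - 2) choose (s - 2)) = real ((n - 1) choose (s - 1)) * (real (s - 1) / real (n - 1))"
proof -
  have "Suc (n - 2) * ((n - 2) choose (s - 2)) = (Suc (n - 2) choose Suc (s - 2)) * Suc (s - 2)"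
    by (rule Suc_times_binomial_eq)
  moreover have "Suc (n - 2) = n - 1" "Suc (s - 2) = s - 1" using assms by auto
  ultimately have "real (n - 1) * real ((n - 2) choose (s - 2))
      = real ((n - 1) choose (s - 1)) * real (s - 1)"
    by (metis of_nat_mult)
  moreover have "real (n - 1) > 0" using assms by simp
  ultimately show ?thesis by (simp add: field_simps)
qed

lemma prod_le_mult_pair:
  fixes g :: "'a \<Rightarrow> real"
  assumes "finite I" "i \<in> I" "j \<in> I" "i \<noteq> j" "\<And>k. k \<in> I \<Longrightarrow> 0 \<le> g k \<and> g k \<le> 1"
  shows "prod g I \<le> g i * g j"
proof -
  have "prod g I = g i * (g j * prod g (I - {i} - {j}))"
    using assms by (simp add: prod.remove[of I i] prod.remove[of "I - {i}" j])
  moreover have "prod g (I - {i} - {j}) \<le> 1" "0 \<le> prod g (I - {i} - {j})"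
    using assms by (auto intro: prod_le_1 prod_nonneg)
  ultimately show ?thesis
    using assms by (simp add: mult_left_le mult_left_mono)
qed

lemma mult_le_mult_first_two:
  fixes r :: "nat \<Rightarrow> real"
  assumes antitone: "\<And>k l. k \<le> l \<Longrightarrow> l < n \<Longrightarrow> r l \<le> r k"
    and nonneg: "\<And>k. k < n \<Longrightarrow> 0 \<le> r k"
    and "i < n" "j < n" "i \<noteq> j"
  shows "r i * r j \<le> r 0 * r 1"
proof -
  have ordered: "r p * r q \<le> r 0 * r 1" if "p < q" "q < n" for p q
    using that antitone[of 0 p] antitone[of 1 q] nonneg[of 0] nonneg[of q]
    by (intro mult_mono) auto
  show ?thesis
    using ordered[of i j] ordered[of j i] assms by (metis linorder_neqE_nat mult.commute)
qed

text \<open>The binomial factor of coordinate \<open>k\<close> is \<open>C(d\<^sub>k-1,s-1)\<close> if \<open>x\<^sub>k = y\<^sub>k\<close> and \<open>(s-1)/(d\<^sub>k-1)\<close>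
  times this otherwise; the ratio decreases with \<open>d\<^sub>k\<close>, so two mismatches cost least in the
  two smallest dimensions.\<close>
lemma card_subset_choices_containing_le:
  assumes mono: "\<And>k l. k \<le> l \<Longrightarrow> l < 4 \<Longrightarrow> d k \<le> d l"
    and "2 \<le> s" "s \<le> d 0"
    and xy: "x \<in> tuples d" "y \<in> tuples d"
    and "i < 4" "j < 4" "i \<noteq> j" "x i \<noteq> y i" "x j \<noteq> y j"
  shows "real (card {S \<in> subset_choices d s. \<forall>k<4. {x k, y k} \<subseteq> S k}) \<le>
    real ((d 0 - 2) choose (s - 2)) * real ((d 1 - 2) choose (s - 2))
      * real ((d 2 - 1) choose (s - 1)) * real ((d 3 - 1) choose (s - 1))"
proof -
  define e where "e k = real ((d k - 1) choose (s - 1))" for k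
  define r where "r k = real (s - 1) / real (d k - 1)" for k
  define g where "g k = (if x k = y k then 1 else r k)" for k
  have s_le: "s \<le> d k" if "k < 4" for k
    using mono[of 0 k] that \<open>s \<le> d 0\<close> by simp
  have binomial_diff2: "real ((d k - 2) choose (s - 2)) = e k * r k" if "k < 4" for k
    unfolding e_def r_def using real_binomial_diff2[OF \<open>2 \<le> s\<close> s_le[OF that]] .
  have factor: "real ((d k - card {x k, y k}) choose (s - card {x k, y k})) = e k * g k"
    if "k < 4" for k
    using binomial_diff2[OF that] by (simp add: e_def g_def numeral_2_eq_2)
  have e_nonneg: "0 \<le> prod e {..<4}" unfolding e_def by (intro prod_nonneg) simp
  have r_bounds: "0 \<le> r k \<and> r k \<le> 1" if "k < 4" for k
    using s_le[OF that] \<open>2 \<le> s\<close> unfolding r_def by (simp add: divide_le_eq_1)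
  have r_antitone: "r l \<le> r k" if "k \<le> l" "l < 4" for k l
    using mono[OF that] s_le[of k] \<open>2 \<le> s\<close> that
    unfolding r_def by (intro divide_left_mono) auto
  have "real (card {S \<in> subset_choices d s. \<forall>k<4. {x k, y k} \<subseteq> S k}) = prod e {..<4} * prod g {..<4}"
    unfolding card_subset_choices_containing[OF xy \<open>2 \<le> s\<close>] of_nat_prod prod.distrib[symmetric]
    using factor by (intro prod.cong) auto
  also have "\<dots> \<le> prod e {..<4} * (r i * r j)"
    using assms r_bounds prod_le_mult_pair[of "{..<4}" i j g]
    by (intro mult_left_mono[OF _ e_nonneg]) (auto simp: g_def)
  also have "\<dots> \<le> prod e {..<4} * (r 0 * r 1)"
    using mult_le_mult_first_two[of 4 r i j] r_antitone r_bounds assms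
    by (intro mult_left_mono[OF _ e_nonneg]) auto
  also have "\<dots> = e 0 * r 0 * (e 1 * r 1) * e 2 * e 3"
    by (simp add: lessThan_nat_numeral)
  finally show ?thesis
    using binomial_diff2[of 0] binomial_diff2[of 1] by (simp add: e_def)
qed

lemma sum_total_defect_substate_le:
  assumes mono: "\<And>k l. k \<le> l \<Longrightarrow> l < 4 \<Longrightarrow> d k \<le> d l"
    and "2 \<le> s" "s \<le> d 0"
  shows "(\<Sum>S\<in>subset_choices d s. total_defect d (substate S a)) \<le>
    real ((d 0 - 2) choose (s - 2)) * real ((d 1 - 2) choose (s - 2))
      * real ((d 2 - 1) choose (s - 1)) * real ((d 3 - 1) choose (s - 1)) * total_defect d a"
    (is "_ \<le> ?D * _")
proof -
  have "exchange_defect a al x y * real (card {S \<in> subset_choices d s. \<forall>k<4. {x k, y k} \<subseteq> S k})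
      \<le> ?D * exchange_defect a al x y" if xy: "x \<in> tuples d" "y \<in> tuples d" for al x y
  proof (cases "exchange_defect a al x y = 0")
    case False
    with xy obtain i j where "i < 4" "j < 4" "i \<noteq> j" "x i \<noteq> y i" "x j \<noteq> y j"
      by (rule exchange_defect_nonzero_imp_two_diffs)
    then show ?thesis
      using card_subset_choices_containing_le[OF assms xy] exchange_defect_nonneg
      by (simp add: mult.commute mult_left_mono)
  qed simp
  then show ?thesis
    unfolding sum_total_defect_substate unfolding total_defect_def sum_distrib_left
    by (intro sum_mono) auto
qed

theorem mainTheorem6:
  fixes d :: "nat \<Rightarrow> nat" and s :: nat and a :: "(nat \<Rightarrow> nat) \<Rightarrow> complex"
  assumes "2 \<le> d 0" "d 0 \<le> d 1" "d 1 \<le> d 2" "d 2 \<le> d 3"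
    and "2 \<le> s" "s \<le> d 0"
    and "trace_proj d a = 1"
  shows "(concurrence4 d a)^2 \<ge>
    (1 / (real ((d 0 - 2) choose (s - 2)) * real ((d 1 - 2) choose (s - 2))
          * real ((d 2 - 1) choose (s - 1)) * real ((d 3 - 1) choose (s - 1))))
    * (\<Sum>S\<in>subset_choices d s. (concurrence4 d (substate S a))^2)"
proof -
  define D where "D = real ((d 0 - 2) choose (s - 2)) * real ((d 1 - 2) choose (s - 2))
          * real ((d 2 - 1) choose (s - 1)) * real ((d 3 - 1) choose (s - 1))"
  have mono: "d k \<le> d l" if "k \<le> l" "l < 4" for k l
    using that assms(2-4) by (auto simp: eval_nat_numeral le_Suc_eq less_Suc_eq)
  have "s - 2 \<le> d k - 2" "s - 1 \<le> d k - 1" if "k < 4" for k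
    using mono[of 0 k] that assms(6) by auto
  then have "0 < D"
    unfolding D_def by (simp add: zero_less_binomial)
  moreover have "(\<Sum>S\<in>subset_choices d s. total_defect d (substate S a)) \<le> D * total_defect d a"
    unfolding D_def using sum_total_defect_substate_le[where d=d and a=a, OF mono assms(5,6)] .
  ultimately have "(\<Sum>S\<in>subset_choices d s. total_defect d (substate S a)) / D \<le> total_defect d a"
    by (simp add: pos_divide_le_eq mult.commute)
  then show ?thesis
    unfolding D_def[symmetric] concurrence4_sq_eq_total_defect sum_divide_distrib[symmetric]
    by simp
qed

end
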